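(* Given a moment graph $\mathcal{G}$ on a lattice $\Lambda$ and a $\mathcal{G}$-compatible equivalence relation `$\sim$' on its vertex set, the quotient $\mathcal{G}_\sim$ is a moment graph on $\Lambda$.
   Context: A moment graph on a lattice $\Lambda$ is $\mathcal{G}=\big((V,\le), l\colon E\to \Lambda\setminus\{0\}\big)$ where $(V,\le)$ is a poset, $E\subset V\times V$ is a set of directed edges $v\to w$ labelled by $l(v\to w)\in\Lambda\setminus\{0\}$, and for every edge $v\to w$ we have $v\le w$, $v\ne w$. An equivalence relation `$\sim$' on $V$ is $\mathcal{G}$-compatible if (EQV1) $v\sim w$ implies $v\sim u$ for all $v\le u\le w$; (EQV2) if $v_1\to w_1\in E$, $v_1\not\sim w_1$, then for any $v_2\sim v_1$ there is a unique $w_2\sim w_1$ with $v_2\to w_2\in E$, and moreover $l(v_1\to w_1)=l(v_2\to w_2)$. The quotient $\mathcal{G}_\sim=\big((V_\sim,\le_\sim),l_\sim\colon E_\sim\to\Lambda\setminus\{0\}\big)$ has vertex set $V_\sim$ the set of equivalence classes $[v]$; edges $E_\sim=\{[v]\to[w]\mid v\not\sim w,\ \exists v'\sim v,\ w'\sim w \text{ with } v'\to w'\in E\}$; $\le_\sim$ the transitive closure of the relations $[v]\le_\sim[w]$ for $[v]\to[w]\in E_\sim$; and $l_\sim([v]\to[w]):=l(v'\to w')$ for $v'\sim v$, $w'\sim w$, $v'\to w'\in E$. *)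

theory Defs
  imports "HOL-Analysis.Analysis"
begin

text \<open>The lattice \<Lambda> is rendered as Z^n, i.e. the type int ^ 'n.\<close>

definition moment_graph ::
  "'v set \<Rightarrow> 'v rel \<Rightarrow> ('v \<times> 'v) set \<Rightarrow> ('v \<times> 'v \<Rightarrow> int ^ 'n) \<Rightarrow> bool" where
  "moment_graph V le E lab \<longleftrightarrow>
     partial_order_on V le \<and>
     E \<subseteq> V \<times> V \<and>
     (\<forall>(v, w) \<in> E. (v, w) \<in> le \<and> v \<noteq> w \<and> lab (v, w) \<noteq> 0)"

definition compatible_equiv ::
  "'v set \<Rightarrow> 'v rel \<Rightarrow> ('v \<times> 'v) set \<Rightarrow> ('v \<times> 'v \<Rightarrow> int ^ 'n) \<Rightarrow> 'v rel \<Rightarrow> bool" where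
  "compatible_equiv V le E lab R \<longleftrightarrow>
     equiv V R \<and>
     \<comment> \<open>EQV1\<close>
     (\<forall>v w u. (v, w) \<in> R \<and> u \<in> V \<and> (v, u) \<in> le \<and> (u, w) \<in> le \<longrightarrow> (v, u) \<in> R) \<and>
     \<comment> \<open>EQV2\<close>
     (\<forall>v1 w1 v2. (v1, w1) \<in> E \<and> (v1, w1) \<notin> R \<and> (v2, v1) \<in> R \<longrightarrow>
        (\<exists>!w2. (w2, w1) \<in> R \<and> (v2, w2) \<in> E) \<and>
        (\<forall>w2. (w2, w1) \<in> R \<and> (v2, w2) \<in> E \<longrightarrow> lab (v1, w1) = lab (v2, w2)))"

definition quot_V :: "'v set \<Rightarrow> 'v rel \<Rightarrow> 'v set set" where
  "quot_V V R = V // R"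

definition quot_E :: "'v set \<Rightarrow> 'v rel \<Rightarrow> ('v \<times> 'v) set \<Rightarrow> ('v set \<times> 'v set) set" where
  "quot_E V R E = {(R `` {v}, R `` {w}) | v w. v \<in> V \<and> w \<in> V \<and> (v, w) \<notin> R \<and>
      (\<exists>v' w'. (v', v) \<in> R \<and> (w', w) \<in> R \<and> (v', w') \<in> E)}"

definition quot_le :: "'v set \<Rightarrow> 'v rel \<Rightarrow> ('v \<times> 'v) set \<Rightarrow> 'v set rel" where
  "quot_le V R E = Id_on (V // R) \<union> (quot_E V R E)\<^sup>+"

definition quot_lab ::
  "'v rel \<Rightarrow> ('v \<times> 'v) set \<Rightarrow> ('v \<times> 'v \<Rightarrow> int ^ 'n) \<Rightarrow> 'v set \<times> 'v set \<Rightarrow> int ^ 'n" where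
  "quot_lab R E lab = (\<lambda>(X, Y). lab (SOME p. fst p \<in> X \<and> snd p \<in> Y \<and> p \<in> E))"

end

theory Submission
  imports Defs
begin

text \<open>By EQV2 every edge of the quotient, and hence every path of the quotient, lifts to a path
starting at any prescribed element of its source class, and the first step of the lift leaves
that class. A cycle through a class X would thus give a \<le>-chain a \<le> c \<le> b with a \<sim> b
and a \<not>\<sim> c, contradicting EQV1. So the quotient edges are acyclic and their reflexive-transitive
closure is a partial order; EQV2 also makes the labels of all edges between two classes agree.\<close>

lemma moment_graphD:
  assumes "moment_graph V le E lab"
  shows moment_graph_partial_order: "partial_order_on V le"
    and moment_graph_edges_subset: "E \<subseteq> V \<times> V"
    and moment_graph_edge_le: "(v, w) \<in> E \<Longrightarrow> (v, w) \<in> le"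
    and moment_graph_label_nonzero: "(v, w) \<in> E \<Longrightarrow> lab (v, w) \<noteq> 0"
  using assms unfolding moment_graph_def by blast+

lemma compatible_equivD:
  assumes "compatible_equiv V le E lab R"
  shows compatible_equiv_equiv: "equiv V R"
    and compatible_equiv_interval:
      "(v, w) \<in> R \<Longrightarrow> u \<in> V \<Longrightarrow> (v, u) \<in> le \<Longrightarrow> (u, w) \<in> le \<Longrightarrow> (v, u) \<in> R"
    and compatible_equiv_lift_edge:
      "(v1, w1) \<in> E \<Longrightarrow> (v1, w1) \<notin> R \<Longrightarrow> (v2, v1) \<in> R \<Longrightarrow> \<exists>w2. (w2, w1) \<in> R \<and> (v2, w2) \<in> E"
    and compatible_equiv_label:
      "(v1, w1) \<in> E \<Longrightarrow> (v1, w1) \<notin> R \<Longrightarrow> (v2, v1) \<in> R \<Longrightarrow> (w2, w1) \<in> R \<Longrightarrow> (v2, w2) \<in> E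
        \<Longrightarrow> lab (v1, w1) = lab (v2, w2)"
  using assms unfolding compatible_equiv_def by blast+

lemma partial_order_on_Id_on_Un_trancl:
  assumes "acyclic r" and "r \<subseteq> A \<times> A"
  shows "partial_order_on A (Id_on A \<union> r\<^sup>+)"
proof -
  have closure_in_A: "r\<^sup>+ \<subseteq> A \<times> A"
    using assms(2) by (rule trancl_subset_Sigma)
  have "Id_on A \<union> r\<^sup>+ \<subseteq> A \<times> A"
    using closure_in_A by blast
  moreover have "refl_on A (Id_on A \<union> r\<^sup>+)"
    unfolding refl_on_def by blast
  moreover have "trans (Id_on A \<union> r\<^sup>+)"
    by (auto simp: trans_def intro: trancl_trans)
  moreover have "antisym (Id_on A \<union> r\<^sup>+)"
    using assms(1) by (auto simp: antisym_def acyclic_def dest: trancl_trans)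
  ultimately show ?thesis
    by (simp add: partial_order_on_def preorder_on_def)
qed

lemma quot_E_subset: "quot_E V R E \<subseteq> V // R \<times> V // R"
  unfolding quot_E_def quotient_def by blast

lemma quot_E_obtain_edge:
  assumes "equiv V R" and "(X, Y) \<in> quot_E V R E"
  obtains v w where "(v, w) \<in> E" "(v, w) \<notin> R" "X = R `` {v}" "Y = R `` {w}" "v \<in> X" "w \<in> Y"
proof -
  obtain v w v' w' where vw: "(v, w) \<notin> R" "X = R `` {v}" "Y = R `` {w}"
    and v'w': "(v', v) \<in> R" "(w', w) \<in> R" "(v', w') \<in> E"
    using assms(2) unfolding quot_E_def by blast
  have classes: "X = R `` {v'}" "Y = R `` {w'}"
    using vw(2,3) equiv_class_eq[OF assms(1) v'w'(1)] equiv_class_eq[OF assms(1) v'w'(2)] by simp_all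
  moreover have "v' \<in> X" "w' \<in> Y"
    unfolding classes using v'w'(1,2) equiv_type[OF assms(1)] equiv_class_self[OF assms(1)] by blast+
  moreover have "(v', w') \<notin> R"
    using vw v'w' assms(1) by (meson equiv_def symE transE)
  ultimately show thesis
    using that v'w'(3) by blast
qed

lemma quot_E_lift_edge:
  assumes "compatible_equiv V le E lab R" and "(X, Y) \<in> quot_E V R E" and "a \<in> X"
  obtains c where "c \<in> Y" "(a, c) \<in> E" "(a, c) \<notin> R"
proof -
  have R: "equiv V R"
    using assms(1) by (rule compatible_equiv_equiv)
  obtain v w where vw: "(v, w) \<in> E" "(v, w) \<notin> R" "X = R `` {v}" "Y = R `` {w}"
    using quot_E_obtain_edge[OF R assms(2)] .
  have "(a, v) \<in> R"
    using assms(3) vw(3) R by (auto elim: equivE dest: symD)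
  then obtain c where c: "(c, w) \<in> R" "(a, c) \<in> E"
    using compatible_equiv_lift_edge[OF assms(1) vw(1,2)] by blast
  have "c \<in> Y"
    using c(1) vw(4) R by (auto elim: equivE dest: symD)
  moreover have "(a, c) \<notin> R"
    using \<open>(a, v) \<in> R\<close> c(1) vw(2) R by (meson equiv_def symE transE)
  ultimately show thesis
    using that c(2) by blast
qed

lemma quot_E_trancl_lift:
  assumes G: "moment_graph V le E lab" and R: "compatible_equiv V le E lab R"
    and "(X, Y) \<in> (quot_E V R E)\<^sup>+" and a: "a \<in> X"
  shows "\<exists>c. (a, c) \<in> E \<and> (a, c) \<notin> R \<and> (\<exists>b \<in> Y. (c, b) \<in> le)"
  using assms(3)
proof (induction rule: trancl_induct)
  case (base Y)
  then obtain c where c: "c \<in> Y" "(a, c) \<in> E" "(a, c) \<notin> R"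
    using quot_E_lift_edge[OF R _ a] by blast
  have "(c, c) \<in> le"
    using c(2) moment_graph_edges_subset[OF G] moment_graph_partial_order[OF G]
    by (auto simp: partial_order_on_def preorder_on_def refl_on_def)
  with c show ?case by blast
next
  case (step Y Z)
  then obtain c b where cb: "(a, c) \<in> E" "(a, c) \<notin> R" "b \<in> Y" "(c, b) \<in> le"
    by blast
  obtain d where d: "d \<in> Z" "(b, d) \<in> E"
    using quot_E_lift_edge[OF R step(2) cb(3)] by blast
  have "(c, d) \<in> le"
    using cb(4) moment_graph_edge_le[OF G d(2)] moment_graph_partial_order[OF G]
    by (auto simp: partial_order_on_def preorder_on_def dest: transD)
  with cb d show ?case by blast
qed

lemma acyclic_quot_E:
  assumes G: "moment_graph V le E lab" and R: "compatible_equiv V le E lab R"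
  shows "acyclic (quot_E V R E)"
proof (rule acyclicI, intro allI notI)
  fix X assume cycle: "(X, X) \<in> (quot_E V R E)\<^sup>+"
  have equiv: "equiv V R"
    using R by (rule compatible_equiv_equiv)
  have "X \<in> V // R"
    using trancl_subset_Sigma[OF quot_E_subset] cycle by blast
  then obtain a where a: "a \<in> V" "X = R `` {a}"
    by (rule quotientE)
  have "a \<in> X"
    unfolding a(2) using equiv a(1) by (rule equiv_class_self)
  then obtain c b where cb: "(a, c) \<in> E" "(a, c) \<notin> R" "b \<in> X" "(c, b) \<in> le"
    using quot_E_trancl_lift[OF G R cycle] by blast
  have "(a, b) \<in> R"
    using cb(3) a(2) by blast
  moreover have "c \<in> V"
    using cb(1) moment_graph_edges_subset[OF G] by blast
  ultimately have "(a, c) \<in> R"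
    using compatible_equiv_interval[OF R] moment_graph_edge_le[OF G cb(1)] cb(4) by blast
  with cb(2) show False ..
qed

lemma quot_lab_eq:
  assumes R: "compatible_equiv V le E lab R"
    and "(X, Y) \<in> quot_E V R E" and "v' \<in> X" "w' \<in> Y" "(v', w') \<in> E"
  shows "quot_lab R E lab (X, Y) = lab (v', w')"
proof -
  have equiv: "equiv V R"
    using R by (rule compatible_equiv_equiv)
  obtain v w where vw: "(v, w) \<in> E" "(v, w) \<notin> R" "X = R `` {v}" "Y = R `` {w}"
    using quot_E_obtain_edge[OF equiv assms(2)] .
  have same_label: "lab (x, y) = lab (v, w)" if "x \<in> X" "y \<in> Y" "(x, y) \<in> E" for x y
  proof -
    have "(x, v) \<in> R" "(y, w) \<in> R"
      using that vw(3,4) equiv by (auto elim: equivE dest: symD)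
    then show ?thesis
      using compatible_equiv_label[OF R vw(1,2)] that(3) by simp
  qed
  define p where "p = (SOME p. fst p \<in> X \<and> snd p \<in> Y \<and> p \<in> E)"
  have "fst p \<in> X \<and> snd p \<in> Y \<and> p \<in> E"
    unfolding p_def by (rule someI[of _ "(v', w')"]) (use assms(3-5) in simp)
  then have "lab p = lab (v, w)"
    using same_label[of "fst p" "snd p"] by simp
  moreover have "quot_lab R E lab (X, Y) = lab p"
    by (simp add: quot_lab_def p_def)
  ultimately show ?thesis
    using same_label assms(3-5) by simp
qed

theorem mainTheorem1:
  fixes V :: "'v set" and le :: "'v rel" and E :: "('v \<times> 'v) set"
    and lab :: "'v \<times> 'v \<Rightarrow> int ^ 'n" and R :: "'v rel"
  assumes "moment_graph V le E lab"
    and "compatible_equiv V le E lab R"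
  shows "moment_graph (quot_V V R) (quot_le V R E) (quot_E V R E) (quot_lab R E lab)
    \<and> (\<forall>(X, Y) \<in> quot_E V R E. \<forall>v' w'. v' \<in> X \<and> w' \<in> Y \<and> (v', w') \<in> E \<longrightarrow>
          lab (v', w') = quot_lab R E lab (X, Y))"
proof -
  note G = assms(1) and R = assms(2)
  have acyclic: "acyclic (quot_E V R E)"
    using G R by (rule acyclic_quot_E)
  have "partial_order_on (V // R) (quot_le V R E)"
    unfolding quot_le_def using acyclic quot_E_subset by (rule partial_order_on_Id_on_Un_trancl)
  moreover have edge_props: "(X, Y) \<in> quot_le V R E" "X \<noteq> Y" "quot_lab R E lab (X, Y) \<noteq> 0"
    if XY: "(X, Y) \<in> quot_E V R E" for X Y
  proof -
    show "(X, Y) \<in> quot_le V R E"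
      using XY by (simp add: quot_le_def r_into_trancl')
    show "X \<noteq> Y"
      using acyclic XY unfolding acyclic_def by (rule irrefl_trancl_rD)
    obtain v w where "(v, w) \<in> E" "v \<in> X" "w \<in> Y"
      using quot_E_obtain_edge[OF compatible_equiv_equiv[OF R] XY] .
    then show "quot_lab R E lab (X, Y) \<noteq> 0"
      using quot_lab_eq[OF R XY] moment_graph_label_nonzero[OF G] by simp
  qed
  moreover have label_props: "lab (v', w') = quot_lab R E lab (X, Y)"
    if "(X, Y) \<in> quot_E V R E" "v' \<in> X" "w' \<in> Y" "(v', w') \<in> E" for X Y v' w'
    using quot_lab_eq[OF R that] by simp
  ultimately show ?thesis
    by (auto simp: moment_graph_def quot_V_def quot_E_subset edge_props(1,3) label_props
        dest: edge_props(2))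
qed

end
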